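(* Let $F=\breve F(\alpha_1,\dots,\alpha_t)$ be a fence. Every statistic in \[ \operatorname{Span}_{\mathbb R}\Big(\bigcup_{i=1}^t\bigcup_{j=1}^{\beta_i}\{\alpha_i\hat\chi_{(i,j)}-j\hat\chi_p-(\alpha_i-j)\hat\chi_v : p\text{ the peak of }S_i,\ v\text{ the valley of }S_i\}\Big) \] is homomesic under promotion $\mathrm{Pro}=\tau_{x_n}\circ\cdots\circ\tau_{x_1}$ acting on $\mathcal J(F)$.
   Context: Fences: let $\alpha=(\alpha_1,\dots,\alpha_t)$ be positive integers with $t\ge2$ and $\alpha_1,\alpha_t\ge2$. Put $a_0=0$, $a_i=\alpha_1+\dots+\alpha_i$, $n=a_t-1$. The fence $\breve F(\alpha)$ is the poset on $\{x_1,\dots,x_n\}$ whose cover relations are: for $1\le j\le n-1$ with $a_{i-1}\le j<a_i$, $x_j\lessdot x_{j+1}$ if $i$ is odd and $x_j\gtrdot x_{j+1}$ if $i$ is even. Segments: $S_1=\{x_j:1\le j\le a_1\}$, $S_i=\{x_j:a_{i-1}\le j\le a_i\}$ for $2\le i\le t-1$, $S_t=\{x_j:a_{t-1}\le j\le n\}$. Shared elements $x_{a_i}$ ($i\in[t-1]$) are peaks (cover two elements) for $i$ odd and valleys (covered by two elements) for $i$ even; the peak (valley) of $S_i$ is the shared element of $S_i$ that is a peak (valley), and the corresponding $\hat\chi$ is identically zero if none exists. $\breve S_i$ is the set of non-shared elements of $S_i$, $\beta_i=\alpha_i-1$, $s_{(i,j)}$ the $j$-th smallest element of $\breve S_i$,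 $\hat\chi_{(i,j)}=\hat\chi_{s_{(i,j)}}$, where $\hat\chi_q(I)=1$ if $q\in I$ and $0$ otherwise for order ideals $I\in\mathcal J(F)$. The toggle $\tau_q:\mathcal J(F)\to\mathcal J(F)$ adds $q$ to $I$ if $q\in\min(F\setminus I)$, removes $q$ if $q\in\max(I)$, and fixes $I$ otherwise; composition is applied right to left. A statistic is homomesic under a bijection if its average over every orbit is the same constant. *)

theory Defs
  imports Complex_Main
begin

(* A composition alpha = (alpha_1,...,alpha_t) is a list; alpha_i = alpha ! (i-1).
   The element x_j of the fence is represented by the natural number j, 1 <= j <= n. *)

definition fa :: "nat list \<Rightarrow> nat \<Rightarrow> nat" where
  "fa \<alpha> i = sum_list (take i \<alpha>)"

definition fn :: "nat list \<Rightarrow> nat" where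
  "fn \<alpha> = fa \<alpha> (length \<alpha>) - 1"

definition elems :: "nat list \<Rightarrow> nat set" where
  "elems \<alpha> = {1..fn \<alpha>}"

definition inblock :: "nat list \<Rightarrow> nat \<Rightarrow> nat \<Rightarrow> bool" where
  "inblock \<alpha> i j \<longleftrightarrow> 1 \<le> i \<and> i \<le> length \<alpha> \<and> fa \<alpha> (i - 1) \<le> j \<and> j < fa \<alpha> i"

(* cover relations: (c, d) \<in> covrel means x_c is covered by x_d *)
definition covrel :: "nat list \<Rightarrow> (nat \<times> nat) set" where
  "covrel \<alpha> =
     {(j, j + 1) | j. 1 \<le> j \<and> j \<le> fn \<alpha> - 1 \<and> (\<exists>i. inblock \<alpha> i j \<and> odd i)} \<union>
     {(j + 1, j) | j. 1 \<le> j \<and> j \<le> fn \<alpha> - 1 \<and> (\<exists>i. inblock \<alpha> i j \<and> even i)}"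

definition fle :: "nat list \<Rightarrow> nat \<Rightarrow> nat \<Rightarrow> bool" where
  "fle \<alpha> x y \<longleftrightarrow> (x, y) \<in> (covrel \<alpha>)\<^sup>*"

definition fless :: "nat list \<Rightarrow> nat \<Rightarrow> nat \<Rightarrow> bool" where
  "fless \<alpha> x y \<longleftrightarrow> fle \<alpha> x y \<and> x \<noteq> y"

definition ideals :: "nat list \<Rightarrow> nat set set" where
  "ideals \<alpha> = {I. I \<subseteq> elems \<alpha> \<and> (\<forall>x\<in>I. \<forall>y. fle \<alpha> y x \<longrightarrow> y \<in> I)}"

definition toggle :: "nat list \<Rightarrow> nat \<Rightarrow> nat set \<Rightarrow> nat set" where
  "toggle \<alpha> q I =
     (if q \<in> I \<and> (\<forall>r\<in>I. \<not> fless \<alpha> q r) then I - {q}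
      else if q \<in> elems \<alpha> - I \<and> (\<forall>r\<in>elems \<alpha> - I. \<not> fless \<alpha> r q) then insert q I
      else I)"

(* promotion Pro = tau_{x_n} o ... o tau_{x_1}  (tau_{x_1} applied first) *)
definition pro :: "nat list \<Rightarrow> nat set \<Rightarrow> nat set" where
  "pro \<alpha> I = fold (toggle \<alpha>) [1..<fn \<alpha> + 1] I"

definition orbit :: "('a \<Rightarrow> 'a) \<Rightarrow> 'a \<Rightarrow> 'a set" where
  "orbit \<phi> x = {(\<phi> ^^ k) x | k. True}"

definition homomesic :: "'a set \<Rightarrow> ('a \<Rightarrow> 'a) \<Rightarrow> ('a \<Rightarrow> real) \<Rightarrow> bool" where
  "homomesic S \<phi> f \<longleftrightarrow>
     (\<exists>c. \<forall>x\<in>S. (\<Sum>y\<in>orbit \<phi> x. f y) / real (card (orbit \<phi> x)) = c)"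

definition seg :: "nat list \<Rightarrow> nat \<Rightarrow> nat set" where
  "seg \<alpha> i =
     (if i = 1 then {1..fa \<alpha> 1}
      else if i = length \<alpha> then {fa \<alpha> (i - 1)..fn \<alpha>}
      else {fa \<alpha> (i - 1)..fa \<alpha> i})"

definition shared :: "nat list \<Rightarrow> nat set" where
  "shared \<alpha> = {fa \<alpha> i | i. 1 \<le> i \<and> i \<le> length \<alpha> - 1}"

definition bseg :: "nat list \<Rightarrow> nat \<Rightarrow> nat set" where
  "bseg \<alpha> i = seg \<alpha> i - shared \<alpha>"

definition sij :: "nat list \<Rightarrow> nat \<Rightarrow> nat \<Rightarrow> nat" where
  "sij \<alpha> i j = (THE s. s \<in> bseg \<alpha> i \<and> card {r \<in> bseg \<alpha> i. fless \<alpha> r s} = j - 1)"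

definition chi :: "nat \<Rightarrow> nat set \<Rightarrow> real" where
  "chi q I = (if q \<in> I then 1 else 0)"

definition is_peak :: "nat list \<Rightarrow> nat \<Rightarrow> bool" where
  "is_peak \<alpha> q \<longleftrightarrow> card {c. (c, q) \<in> covrel \<alpha>} = 2"

definition is_valley :: "nat list \<Rightarrow> nat \<Rightarrow> bool" where
  "is_valley \<alpha> q \<longleftrightarrow> card {d. (q, d) \<in> covrel \<alpha>} = 2"

definition chi_peak :: "nat list \<Rightarrow> nat \<Rightarrow> nat set \<Rightarrow> real" where
  "chi_peak \<alpha> i I =
     (if \<exists>p. p \<in> seg \<alpha> i \<inter> shared \<alpha> \<and> is_peak \<alpha> p
      then chi (THE p. p \<in> seg \<alpha> i \<inter> shared \<alpha> \<and> is_peak \<alpha> p) I else 0)"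

definition chi_valley :: "nat list \<Rightarrow> nat \<Rightarrow> nat set \<Rightarrow> real" where
  "chi_valley \<alpha> i I =
     (if \<exists>v. v \<in> seg \<alpha> i \<inter> shared \<alpha> \<and> is_valley \<alpha> v
      then chi (THE v. v \<in> seg \<alpha> i \<inter> shared \<alpha> \<and> is_valley \<alpha> v) I else 0)"

definition gen :: "nat list \<Rightarrow> nat \<Rightarrow> nat \<Rightarrow> nat set \<Rightarrow> real" where
  "gen \<alpha> i j I = real (\<alpha> ! (i - 1)) * chi (sij \<alpha> i j) I - real j * chi_peak \<alpha> i I
                  - (real (\<alpha> ! (i - 1)) - real j) * chi_valley \<alpha> i I"

end

theory Submission
  imports Defs
begin

(* Every generator g is cohomologous to a constant under promotion: g = c + h o Pro - h on order
   ideals for a constant c and a potential h. Summing over an orbit, the potential telescopes, so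
   the orbit average of g is c; and this property is preserved by linear combinations.

   An order ideal meets a segment in an initial chain (in fence order), so the generator of that
   segment only depends on the number H of its elements in the ideal. Promotion toggles from left
   to right; on a segment increasing from left to right it lowers H by one, on a decreasing one it
   raises H by one, except for a wrap-around whose exact target depends on the neighbouring
   segments. The generator is balanced exactly so that a single piecewise linear potential in H
   absorbs every possible wrap-around. *)

definition cohomologous_const :: "'a set \<Rightarrow> ('a \<Rightarrow> 'a) \<Rightarrow> ('a \<Rightarrow> real) \<Rightarrow> bool" where
  "cohomologous_const S \<phi> f \<longleftrightarrow> (\<exists>c h. \<forall>x\<in>S. f x - c = h (\<phi> x) - h x)"

lemma cohomologous_constI:
  "(\<And>x. x \<in> S \<Longrightarrow> f x - c = h (\<phi> x) - h x) \<Longrightarrow> cohomologous_const S \<phi> f"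
  unfolding cohomologous_const_def by blast

lemma cohomologous_constE:
  assumes "cohomologous_const S \<phi> f"
  obtains c h where "\<And>x. x \<in> S \<Longrightarrow> f x - c = h (\<phi> x) - h x"
  using assms unfolding cohomologous_const_def by auto

lemma cohomologous_const_scale:
  assumes "cohomologous_const S \<phi> f"
  shows "cohomologous_const S \<phi> (\<lambda>x. a * f x)"
proof -
  obtain c h where "\<And>x. x \<in> S \<Longrightarrow> f x - c = h (\<phi> x) - h x"
    using assms by (elim cohomologous_constE) blast
  then show ?thesis
    by (intro cohomologous_constI[where c = "a * c" and h = "\<lambda>y. a * h y"])
      (metis right_diff_distrib)
qed

lemma cohomologous_const_add:
  assumes "cohomologous_const S \<phi> f" and "cohomologous_const S \<phi> g"
  shows "cohomologous_const S \<phi> (\<lambda>x. f x + g x)"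
proof -
  obtain c h where "\<And>x. x \<in> S \<Longrightarrow> f x - c = h (\<phi> x) - h x"
    using assms(1) by (elim cohomologous_constE) blast
  moreover obtain d k where "\<And>x. x \<in> S \<Longrightarrow> g x - d = k (\<phi> x) - k x"
    using assms(2) by (elim cohomologous_constE) blast
  ultimately show ?thesis
    by (intro cohomologous_constI[where c = "c + d" and h = "\<lambda>y. h y + k y"])
      (simp add: algebra_simps)
qed

lemma cohomologous_const_sum:
  assumes "finite K" and "\<And>k. k \<in> K \<Longrightarrow> cohomologous_const S \<phi> (f k)"
  shows "cohomologous_const S \<phi> (\<lambda>x. \<Sum>k\<in>K. f k x)"
  using assms
proof (induction K rule: finite_induct)
  case empty
  show ?case by (rule cohomologous_constI[where c = 0 and h = "\<lambda>_. 0"]) simp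
next
  case (insert k K)
  then show ?case using cohomologous_const_add[of S \<phi> "f k"] by simp
qed

lemma orbit_subset:
  assumes "\<phi> ` S \<subseteq> S" and "x \<in> S"
  shows "orbit \<phi> x \<subseteq> S"
proof -
  have "(\<phi> ^^ k) x \<in> S" for k
    by (induction k) (use assms in auto)
  then show ?thesis unfolding orbit_def by auto
qed

lemma image_orbit:
  assumes "finite S" and "\<phi> ` S \<subseteq> S" and "inj_on \<phi> S" and "x \<in> S"
  shows "\<phi> ` orbit \<phi> x = orbit \<phi> x"
proof (rule endo_inj_surj)
  show "finite (orbit \<phi> x)" using orbit_subset assms finite_subset by metis
  show "\<phi> ` orbit \<phi> x \<subseteq> orbit \<phi> x"
  proof
    fix y assume "y \<in> \<phi> ` orbit \<phi> x"
    then obtain k where "y = (\<phi> ^^ Suc k) x" unfolding orbit_def by auto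
    then show "y \<in> orbit \<phi> x" unfolding orbit_def by blast
  qed
  show "inj_on \<phi> (orbit \<phi> x)" using orbit_subset assms inj_on_subset by metis
qed

lemma homomesic_if_cohomologous_const:
  assumes "finite S" and "\<phi> ` S \<subseteq> S" and "inj_on \<phi> S"
    and "cohomologous_const S \<phi> f"
  shows "homomesic S \<phi> f"
proof -
  obtain c h where cob: "\<And>x. x \<in> S \<Longrightarrow> f x - c = h (\<phi> x) - h x"
    using assms(4) by (elim cohomologous_constE) blast
  have "(\<Sum>y\<in>orbit \<phi> x. f y) / real (card (orbit \<phi> x)) = c" if x: "x \<in> S" for x
  proof -
    let ?O = "orbit \<phi> x"
    have O: "?O \<subseteq> S" using orbit_subset assms(2) x .
    have "finite ?O" using finite_subset[OF O assms(1)] .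
    have "x \<in> ?O" unfolding orbit_def by (auto intro: exI[of _ 0])
    have "(\<Sum>y\<in>?O. h (\<phi> y)) = (\<Sum>y\<in>?O. h y)"
      using sum.reindex[of \<phi> ?O h] image_orbit[OF assms(1-3) x] inj_on_subset[OF assms(3) O]
      by simp
    then have "(\<Sum>y\<in>?O. f y - c) = 0"
      using cob O by (simp add: subset_iff sum_subtractf)
    then have "(\<Sum>y\<in>?O. f y) = real (card ?O) * c"
      by (simp add: sum_subtractf)
    then show ?thesis using \<open>finite ?O\<close> \<open>x \<in> ?O\<close> card_gt_0_iff by fastforce
  qed
  then show ?thesis unfolding homomesic_def by blast
qed

text \<open>A segment \<open>S\<^sub>i\<close> with \<open>\<alpha>\<^sub>i = A\<close>, together with its valley and its peak, is a chain of
  \<open>A + 1\<close> elements, and an order ideal contains its \<open>H\<close> lowest ones. In terms of \<open>H\<close>, the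
  generator for \<open>j\<close> is \<open>height_stat A j H\<close>, and promotion moves \<open>H\<close> as described by
  \<open>cyc_down A\<close> on segments increasing from left to right and by \<open>cyc_up A\<close> on decreasing ones.
  A missing valley (in the first or last segment) is counted as always present, shifting \<open>H\<close>
  by one.\<close>

definition height_stat :: "nat \<Rightarrow> nat \<Rightarrow> nat \<Rightarrow> real" where
  "height_stat A j H = (if j < H then real A else 0) - (if A < H then real j else 0)
     - (if 0 < H then real A - real j else 0)"

definition cyc_down :: "nat \<Rightarrow> nat \<Rightarrow> nat \<Rightarrow> bool" where
  "cyc_down A H H' \<longleftrightarrow> (0 < H \<and> H \<le> A + 1 \<and> H' = H - 1) \<or> (H \<le> 1 \<and> (H' = A \<or> H' = A + 1))"

definition cyc_up :: "nat \<Rightarrow> nat \<Rightarrow> nat \<Rightarrow> bool" where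
  "cyc_up A H H' \<longleftrightarrow> (H \<le> A \<and> H' = H + 1) \<or> ((H = A \<or> H = A + 1) \<and> H' \<le> 1)"

definition potential :: "nat \<Rightarrow> nat \<Rightarrow> nat \<Rightarrow> real" where
  "potential A j H = (if H \<le> j then real H * (real A - real j)
     else if H \<le> A then (real A - real H) * real j else 0)"

lemma height_stat_cyc_down:
  assumes "0 < j" "j < A" and "cyc_down A H H'"
  shows "height_stat A j H = potential A j H' - potential A j H"
  using assms unfolding cyc_down_def
  by (cases "H \<le> j"; cases "H = 1"; cases "H = j + 1"; cases "H = A + 1")
    (auto simp: height_stat_def potential_def of_nat_diff algebra_simps)

lemma height_stat_cyc_up:
  assumes "0 < j" "j < A" and "cyc_up A H H'"
  shows "height_stat A j H = potential A j (H - 1) - potential A j (H' - 1)"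
  using assms unfolding cyc_up_def
  by (cases "H = 0"; cases "H \<le> j"; cases "H = j + 1")
    (auto simp: height_stat_def potential_def of_nat_diff algebra_simps)

lemma cohomologous_const_height_stat_down:
  assumes "0 < j" "j < A"
    and "\<And>x. x \<in> S \<Longrightarrow> f x = height_stat A j (ht x) + c"
    and "\<And>x. x \<in> S \<Longrightarrow> cyc_down A (ht x) (ht (\<phi> x))"
  shows "cohomologous_const S \<phi> f"
  by (rule cohomologous_constI[where c = c and h = "\<lambda>x. potential A j (ht x)"])
    (simp add: assms height_stat_cyc_down)

lemma cohomologous_const_height_stat_up:
  assumes "0 < j" "j < A"
    and "\<And>x. x \<in> S \<Longrightarrow> f x = height_stat A j (ht x) + c"
    and "\<And>x. x \<in> S \<Longrightarrow> cyc_up A (ht x) (ht (\<phi> x))"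
  shows "cohomologous_const S \<phi> f"
  by (rule cohomologous_constI[where c = c and h = "\<lambda>x. - potential A j (ht x - 1)"])
    (simp add: assms(3) height_stat_cyc_up[OF assms(1,2) assms(4)])

lemma initial_segment_eq_atLeastLessThan:
  fixes S :: "nat set"
  assumes sub: "S \<subseteq> {L..R}" and closed: "\<And>x y. y \<in> S \<Longrightarrow> L \<le> x \<Longrightarrow> x \<le> y \<Longrightarrow> x \<in> S"
  shows "S = {L..<L + card S}"
proof (cases "S = {}")
  case False
  have fin: "finite S" using sub finite_subset by blast
  have "S = {L..Max S}"
  proof
    show "S \<subseteq> {L..Max S}" using sub fin by auto
    show "{L..Max S} \<subseteq> S" using closed Max_in[OF fin False] by auto
  qed
  moreover have "L \<le> Max S" using sub Max_in[OF fin False] by auto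
  ultimately show ?thesis by (metis Suc_diff_le add_Suc_right atLeastLessThanSuc_atLeastAtMost
      card_atLeastAtMost le_add_diff_inverse)
qed simp

lemma final_segment_eq_atLeastAtMost:
  fixes S :: "nat set"
  assumes sub: "S \<subseteq> {L..R}" and closed: "\<And>x y. y \<in> S \<Longrightarrow> y \<le> x \<Longrightarrow> x \<le> R \<Longrightarrow> x \<in> S"
  shows "S = {R + 1 - card S..R}"
proof (cases "S = {}")
  case False
  have fin: "finite S" using sub finite_subset by blast
  have "S = {Min S..R}"
  proof
    show "S \<subseteq> {Min S..R}" using sub fin by auto
    show "{Min S..R} \<subseteq> S" using closed Min_in[OF fin False] by auto
  qed
  moreover have "Min S \<le> R" using sub Min_in[OF fin False] by auto
  ultimately show ?thesis
    by (metis Suc_diff_le Suc_eq_plus1 card_atLeastAtMost diff_diff_cancel le_SucI)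
qed simp

definition run_height :: "nat \<Rightarrow> nat \<Rightarrow> nat set \<Rightarrow> nat" where
  "run_height L R K = card (K \<inter> {L..R})"

lemma run_height_le: "run_height L R K \<le> R + 1 - L"
proof -
  have "card (K \<inter> {L..R}) \<le> card {L..R}" by (rule card_mono) auto
  then show ?thesis unfolding run_height_def by simp
qed

locale fence =
  fixes \<alpha> :: "nat list"
  assumes length_ge_2: "length \<alpha> \<ge> 2"
    and parts_pos: "\<forall>x\<in>set \<alpha>. x > 0"
    and hd_ge_2: "hd \<alpha> \<ge> 2" and last_ge_2: "last \<alpha> \<ge> 2"
begin

abbreviation "N \<equiv> fn \<alpha>"
abbreviation "T \<equiv> length \<alpha>"

definition up :: "nat \<Rightarrow> bool" where
  "up j \<longleftrightarrow> (\<exists>i. inblock \<alpha> i j \<and> odd i)"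

lemma fa_0 [simp]: "fa \<alpha> 0 = 0"
  by (simp add: fa_def)

lemma fa_Suc: "i < T \<Longrightarrow> fa \<alpha> (Suc i) = fa \<alpha> i + \<alpha> ! i"
  by (simp add: fa_def take_Suc_conv_app_nth)

lemma fa_pred_add: "1 \<le> i \<Longrightarrow> i \<le> T \<Longrightarrow> fa \<alpha> i = fa \<alpha> (i - 1) + \<alpha> ! (i - 1)"
  using fa_Suc[of "i - 1"] by simp

lemma fa_less: "i < k \<Longrightarrow> k \<le> T \<Longrightarrow> fa \<alpha> i < fa \<alpha> k"
proof (induction k)
  case (Suc k)
  have "fa \<alpha> k < fa \<alpha> (Suc k)"
    using fa_Suc[of k] parts_pos nth_mem Suc.prems by fastforce
  then show ?case using Suc by (cases "i = k") auto
qed simp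

lemma fa_le_iff: "i \<le> T \<Longrightarrow> k \<le> T \<Longrightarrow> fa \<alpha> i \<le> fa \<alpha> k \<longleftrightarrow> i \<le> k"
  using fa_less[of i k] fa_less[of k i] by (cases i k rule: linorder_cases) auto

lemma alpha_ne_Nil: "\<alpha> \<noteq> []"
  using length_ge_2 by auto

lemma fa_1: "fa \<alpha> 1 = \<alpha> ! 0"
  using fa_Suc[of 0] alpha_ne_Nil by simp

lemma nth_0_ge_2: "\<alpha> ! 0 \<ge> 2"
  using hd_ge_2 hd_conv_nth[OF alpha_ne_Nil] by simp

lemma nth_last_ge_2: "\<alpha> ! (T - 1) \<ge> 2"
  using last_ge_2 last_conv_nth[OF alpha_ne_Nil] by simp

lemma N_Suc_eq: "N + 1 = fa \<alpha> (T - 1) + \<alpha> ! (T - 1)"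
proof -
  have "Suc (T - 1) = T" "T - 1 < T" using length_ge_2 by auto
  then have "fa \<alpha> T = fa \<alpha> (T - 1) + \<alpha> ! (T - 1)"
    using fa_Suc[of "T - 1"] by metis
  then show ?thesis using nth_last_ge_2 by (simp add: fn_def)
qed

lemma fa_shared_bounds:
  assumes "1 \<le> k" "k \<le> T - 1"
  shows "2 \<le> fa \<alpha> k" and "fa \<alpha> k < N"
proof -
  have "fa \<alpha> 1 \<le> fa \<alpha> k" using fa_le_iff[of 1 k] assms by simp
  then show "2 \<le> fa \<alpha> k" using fa_1 nth_0_ge_2 by simp
  have "fa \<alpha> k \<le> fa \<alpha> (T - 1)" using fa_le_iff[of k "T - 1"] assms by auto
  then show "fa \<alpha> k < N" using N_Suc_eq nth_last_ge_2 by auto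
qed

lemma inblock_unique: "inblock \<alpha> i j \<Longrightarrow> inblock \<alpha> i' j \<Longrightarrow> i = i'"
proof (induction i i' rule: linorder_less_wlog)
  case (less i i')
  then have "fa \<alpha> i \<le> fa \<alpha> (i' - 1)" by (subst fa_le_iff) (auto simp: inblock_def)
  then show ?case using less by (auto simp: inblock_def)
qed auto

lemma inblock_exists: "j < fa \<alpha> T \<Longrightarrow> \<exists>i. inblock \<alpha> i j"
proof -
  assume j: "j < fa \<alpha> T"
  define i where "i = (LEAST i. j < fa \<alpha> i)"
  have "j < fa \<alpha> i" "i \<le> T" unfolding i_def by (rule LeastI[of _ T], fact j, rule Least_le, fact j)
  moreover have "i \<noteq> 0" using \<open>j < fa \<alpha> i\<close> by (intro notI) simp
  moreover have "\<not> j < fa \<alpha> (i - 1)"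
    using not_less_Least[of "i - 1" "\<lambda>i. j < fa \<alpha> i"] \<open>i \<noteq> 0\<close> unfolding i_def by auto
  ultimately show ?thesis unfolding inblock_def by (intro exI[of _ i]) auto
qed

lemma up_iff_odd: "1 \<le> i \<Longrightarrow> i \<le> T \<Longrightarrow> fa \<alpha> (i - 1) \<le> x \<Longrightarrow> x < fa \<alpha> i \<Longrightarrow> up x \<longleftrightarrow> odd i"
  unfolding up_def using inblock_unique by (auto simp: inblock_def)

lemma covrel_iff: "(c, d) \<in> covrel \<alpha> \<longleftrightarrow>
   (1 \<le> c \<and> c < N \<and> d = c + 1 \<and> up c) \<or> (1 \<le> d \<and> d < N \<and> c = d + 1 \<and> \<not> up d)"
proof -
  have "(\<exists>i. inblock \<alpha> i j \<and> even i) \<longleftrightarrow> \<not> up j" if "j < N" for j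
  proof -
    obtain i where "inblock \<alpha> i j" using inblock_exists \<open>j < N\<close> by (force simp: fn_def)
    then show ?thesis using inblock_unique unfolding up_def by blast
  qed
  moreover have "j \<le> N - 1 \<longleftrightarrow> j < N" if "1 \<le> j" for j using that by auto
  ultimately show ?thesis unfolding covrel_def up_def by auto
qed

lemma covrel_in_elems: "(c, d) \<in> covrel \<alpha> \<Longrightarrow> c \<in> {1..N} \<and> d \<in> {1..N} \<and> c \<noteq> d"
  unfolding covrel_iff by auto

lemma ideals_iff:
  "I \<in> ideals \<alpha> \<longleftrightarrow> I \<subseteq> {1..N} \<and> (\<forall>c d. (c, d) \<in> covrel \<alpha> \<longrightarrow> d \<in> I \<longrightarrow> c \<in> I)"
proof -
  have "y \<in> I" if "(y, x) \<in> (covrel \<alpha>)\<^sup>*" "x \<in> I"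
    and "\<forall>c d. (c, d) \<in> covrel \<alpha> \<longrightarrow> d \<in> I \<longrightarrow> c \<in> I" for x y
    using that by (induction rule: converse_rtrancl_induct) blast+
  then show ?thesis unfolding ideals_def elems_def fle_def by blast
qed

lemma ideal_cover_closed: "I \<in> ideals \<alpha> \<Longrightarrow> (c, d) \<in> covrel \<alpha> \<Longrightarrow> d \<in> I \<Longrightarrow> c \<in> I"
  using ideals_iff by blast

lemma finite_ideals: "finite (ideals \<alpha>)"
proof (rule finite_subset)
  show "ideals \<alpha> \<subseteq> Pow {1..N}" using ideals_iff by blast
qed simp

lemma toggle_eq:
  assumes I: "I \<in> ideals \<alpha>" and q: "q \<in> {1..N}"
  shows "toggle \<alpha> q I =
    (if q \<in> I \<and> (\<forall>d. (q, d) \<in> covrel \<alpha> \<longrightarrow> d \<notin> I) then I - {q}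
     else if q \<notin> I \<and> (\<forall>c. (c, q) \<in> covrel \<alpha> \<longrightarrow> c \<in> I) then insert q I else I)"
proof -
  have max: "(\<forall>r\<in>I. \<not> fless \<alpha> q r) \<longleftrightarrow> (\<forall>d. (q, d) \<in> covrel \<alpha> \<longrightarrow> d \<notin> I)"
  proof
    assume none: "\<forall>d. (q, d) \<in> covrel \<alpha> \<longrightarrow> d \<notin> I"
    show "\<forall>r\<in>I. \<not> fless \<alpha> q r"
    proof (intro ballI notI)
      fix r assume "r \<in> I" "fless \<alpha> q r"
      then obtain d where "(q, d) \<in> covrel \<alpha>" "(d, r) \<in> (covrel \<alpha>)\<^sup>*"
        unfolding fless_def fle_def by (metis converse_rtranclE)
      then show False using none I \<open>r \<in> I\<close> unfolding ideals_def fle_def by blast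
    qed
  qed (auto simp: fless_def fle_def dest: covrel_in_elems)
  have min: "(\<forall>r\<in>elems \<alpha> - I. \<not> fless \<alpha> r q) \<longleftrightarrow> (\<forall>c. (c, q) \<in> covrel \<alpha> \<longrightarrow> c \<in> I)"
  proof
    assume all: "\<forall>c. (c, q) \<in> covrel \<alpha> \<longrightarrow> c \<in> I"
    show "\<forall>r\<in>elems \<alpha> - I. \<not> fless \<alpha> r q"
    proof (intro ballI notI)
      fix r assume "r \<in> elems \<alpha> - I" "fless \<alpha> r q"
      then obtain c where "(r, c) \<in> (covrel \<alpha>)\<^sup>*" "(c, q) \<in> covrel \<alpha>"
        unfolding fless_def fle_def by (metis rtranclE)
      then show False using all I \<open>r \<in> elems \<alpha> - I\<close> unfolding ideals_def fle_def by blast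
    qed
  next
    assume "\<forall>r\<in>elems \<alpha> - I. \<not> fless \<alpha> r q"
    then show "\<forall>c. (c, q) \<in> covrel \<alpha> \<longrightarrow> c \<in> I"
      unfolding fless_def fle_def elems_def using covrel_in_elems by blast
  qed
  have "q \<in> elems \<alpha> - I \<longleftrightarrow> q \<notin> I" using q by (simp add: elems_def)
  then show ?thesis unfolding toggle_def max min by presburger
qed

lemma toggle_outside: "I \<in> ideals \<alpha> \<Longrightarrow> q \<notin> {1..N} \<Longrightarrow> toggle \<alpha> q I = I"
  unfolding toggle_def elems_def using ideals_iff by auto

lemma toggle_in_ideals:
  assumes I: "I \<in> ideals \<alpha>"
  shows "toggle \<alpha> q I \<in> ideals \<alpha>"
proof (cases "q \<in> {1..N}")
  case True
  show ?thesis
    unfolding toggle_eq[OF I True] using I True unfolding ideals_iff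
    by (auto dest: covrel_in_elems)
qed (simp add: toggle_outside I)

lemma toggle_toggle:
  assumes I: "I \<in> ideals \<alpha>"
  shows "toggle \<alpha> q (toggle \<alpha> q I) = I"
proof (cases "q \<in> {1..N}")
  case True
  show ?thesis
    unfolding toggle_eq[OF toggle_in_ideals[OF I] True] unfolding toggle_eq[OF I True]
    using ideal_cover_closed[OF I] covrel_in_elems by auto
qed (simp add: toggle_outside toggle_in_ideals I)

lemma fold_toggle_in_ideals: "I \<in> ideals \<alpha> \<Longrightarrow> fold (toggle \<alpha>) qs I \<in> ideals \<alpha>"
  by (induction qs arbitrary: I) (auto simp: toggle_in_ideals)

lemma pro_in_ideals: "I \<in> ideals \<alpha> \<Longrightarrow> pro \<alpha> I \<in> ideals \<alpha>"
  unfolding pro_def by (rule fold_toggle_in_ideals)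

lemma inj_on_pro: "inj_on (pro \<alpha>) (ideals \<alpha>)"
proof -
  have "I = I'" if "I \<in> ideals \<alpha>" "I' \<in> ideals \<alpha>" "fold (toggle \<alpha>) qs I = fold (toggle \<alpha>) qs I'"
    for qs I I'
    using that
  proof (induction qs arbitrary: I I')
    case (Cons q qs)
    then have "toggle \<alpha> q I = toggle \<alpha> q I'" by (simp add: toggle_in_ideals)
    then show ?case using toggle_toggle Cons.prems by metis
  qed simp
  then show ?thesis unfolding pro_def inj_on_def by blast
qed

lemma mem_fold_toggle_iff: "y \<notin> set qs \<Longrightarrow> y \<in> fold (toggle \<alpha>) qs S \<longleftrightarrow> y \<in> S"
  by (induction qs arbitrary: S) (auto simp: toggle_def)

text \<open>Promotion toggles from left to right: when x is toggled, its left neighbour already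
  has its new status and its right neighbour still has its old one.\<close>

lemma mem_pro_iff:
  assumes I: "I \<in> ideals \<alpha>" and x: "1 \<le> x" "x \<le> N"
  shows "x \<in> pro \<alpha> I \<longleftrightarrow>
    (if x \<in> I then (x < N \<and> up x \<and> x + 1 \<in> I) \<or> (1 < x \<and> \<not> up (x - 1) \<and> x - 1 \<in> pro \<alpha> I)
     else (1 < x \<and> up (x - 1) \<longrightarrow> x - 1 \<in> pro \<alpha> I) \<and> (x < N \<and> \<not> up x \<longrightarrow> x + 1 \<in> I))"
proof -
  define S where "S = fold (toggle \<alpha>) [1..<x] I"
  have S: "S \<in> ideals \<alpha>" unfolding S_def using fold_toggle_in_ideals[OF I] .
  have "[1..<N + 1] = [1..<x] @ [x..<N + 1]"
    using x upt_add_eq_append[of 1 x "N + 1 - x"] by simp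
  also have "\<dots> = [1..<x] @ x # [x + 1..<N + 1]"
    using x by (simp add: upt_conv_Cons)
  finally have upt_split: "[1..<N + 1] = [1..<x] @ x # [x + 1..<N + 1]" .
  have pro_eq: "pro \<alpha> I = fold (toggle \<alpha>) [x + 1..<N + 1] (toggle \<alpha> x S)"
    by (simp only: pro_def S_def upt_split fold_append fold_Cons comp_def)
  have x_pro: "x \<in> pro \<alpha> I \<longleftrightarrow> x \<in> toggle \<alpha> x S"
    unfolding pro_eq by (rule mem_fold_toggle_iff) (unfold set_upt, simp)
  have left: "x - 1 \<in> S \<longleftrightarrow> x - 1 \<in> pro \<alpha> I" if "1 < x"
    using that unfolding pro_eq
    by (subst mem_fold_toggle_iff) (unfold set_upt, auto simp: toggle_def)
  have right: "y \<in> S \<longleftrightarrow> y \<in> I" if "x \<le> y" for y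
    using that unfolding S_def by (intro mem_fold_toggle_iff) (unfold set_upt, simp)
  have upper: "(\<forall>d. (x, d) \<in> covrel \<alpha> \<longrightarrow> d \<notin> S) \<longleftrightarrow>
     \<not> ((x < N \<and> up x \<and> x + 1 \<in> S) \<or> (1 < x \<and> \<not> up (x - 1) \<and> x - 1 \<in> S))"
    unfolding covrel_iff using x by (cases x) auto
  have lower: "(\<forall>c. (c, x) \<in> covrel \<alpha> \<longrightarrow> c \<in> S) \<longleftrightarrow>
     ((1 < x \<and> up (x - 1) \<longrightarrow> x - 1 \<in> S) \<and> (x < N \<and> \<not> up x \<longrightarrow> x + 1 \<in> S))"
    unfolding covrel_iff using x by (cases x) auto
  have "x \<in> {1..N}" using x by simp
  from toggle_eq[OF S this] have "x \<in> toggle \<alpha> x S \<longleftrightarrow>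
    (if x \<in> S then \<not> (\<forall>d. (x, d) \<in> covrel \<alpha> \<longrightarrow> d \<notin> S) else (\<forall>c. (c, x) \<in> covrel \<alpha> \<longrightarrow> c \<in> S))"
    by auto
  then show ?thesis
    unfolding x_pro upper lower using left right[of x] right[of "x + 1"] by auto
qed

definition up_run :: "nat \<Rightarrow> nat \<Rightarrow> bool" where
  "up_run L R \<longleftrightarrow> 1 \<le> L \<and> L < R \<and> R \<le> N \<and> (\<forall>x. L \<le> x \<longrightarrow> x < R \<longrightarrow> up x)"

definition down_run :: "nat \<Rightarrow> nat \<Rightarrow> bool" where
  "down_run L R \<longleftrightarrow> 1 \<le> L \<and> L < R \<and> R \<le> N \<and> (\<forall>x. L \<le> x \<longrightarrow> x < R \<longrightarrow> \<not> up x)"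

lemma mem_iff_up_run:
  assumes run: "up_run L R" and K: "K \<in> ideals \<alpha>" and x: "L \<le> x" "x \<le> R"
  shows "x \<in> K \<longleftrightarrow> x < L + run_height L R K"
proof -
  have closed: "x \<in> K" if "y \<in> K" "L \<le> x" "x \<le> y" "y \<le> R" for x y
    using that
  proof (induction "y - x" arbitrary: y)
    case (Suc d)
    have "(y - 1, y) \<in> covrel \<alpha>"
      using Suc.hyps(2) Suc.prems run unfolding up_run_def covrel_iff by auto
    then have "y - 1 \<in> K" using ideal_cover_closed[OF K] Suc.prems by blast
    then show ?case using Suc by (intro Suc.hyps(1)[of "y - 1"]) auto
  qed simp
  have segment: "K \<inter> {L..R} = {L..<L + run_height L R K}"
    unfolding run_height_def
  proof (rule initial_segment_eq_atLeastLessThan)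
    fix x y assume "y \<in> K \<inter> {L..R}" "L \<le> x" "x \<le> y"
    then show "x \<in> K \<inter> {L..R}" using closed[of y x] by auto
  qed auto
  have "x \<in> K \<longleftrightarrow> x \<in> K \<inter> {L..R}" using x by simp
  then show ?thesis unfolding segment using x by simp
qed

lemma mem_iff_down_run:
  assumes run: "down_run L R" and K: "K \<in> ideals \<alpha>" and x: "L \<le> x" "x \<le> R"
  shows "x \<in> K \<longleftrightarrow> R < x + run_height L R K"
proof -
  have closed: "x \<in> K" if "y \<in> K" "y \<le> x" "x \<le> R" "L \<le> y" for x y
    using that
  proof (induction "x - y" arbitrary: x)
    case (Suc d)
    have "(x, x - 1) \<in> covrel \<alpha>"
      using Suc.hyps(2) Suc.prems run unfolding down_run_def covrel_iff by auto
    moreover have "x - 1 \<in> K" using Suc by (intro Suc.hyps(1)[of "x - 1"]) auto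
    ultimately show ?case using ideal_cover_closed[OF K] by blast
  qed simp
  have segment: "K \<inter> {L..R} = {R + 1 - run_height L R K..R}"
    unfolding run_height_def
  proof (rule final_segment_eq_atLeastAtMost)
    fix x y assume "y \<in> K \<inter> {L..R}" "y \<le> x" "x \<le> R"
    then show "x \<in> K \<inter> {L..R}" using closed[of y x] by auto
  qed auto
  have "x \<in> K \<longleftrightarrow> x \<in> K \<inter> {L..R}" using x by simp
  then show ?thesis unfolding segment using x run_height_le[of L R K] by auto
qed

lemma run_height_eqI_up:
  assumes run: "up_run L R" and K: "K \<in> ideals \<alpha>" and k: "k \<le> R + 1 - L"
    and top: "0 < k \<Longrightarrow> L + k - 1 \<in> K" and above: "k \<le> R - L \<Longrightarrow> L + k \<notin> K"
  shows "run_height L R K = k"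
proof -
  have LR: "L < R" using run unfolding up_run_def by simp
  have "k \<le> run_height L R K"
  proof (cases "k = 0")
    case False
    then have "L + k - 1 < L + run_height L R K"
      using top mem_iff_up_run[OF run K, of "L + k - 1"] k LR by auto
    then show ?thesis by linarith
  qed simp
  moreover have "run_height L R K \<le> k"
    using above mem_iff_up_run[OF run K, of "L + k"] run_height_le[of L R K] k LR
    by (cases "k \<le> R - L") auto
  ultimately show ?thesis by simp
qed

lemma run_height_eqI_down:
  assumes run: "down_run L R" and K: "K \<in> ideals \<alpha>" and k: "k \<le> R + 1 - L"
    and bottom: "0 < k \<Longrightarrow> R + 1 - k \<in> K" and below: "k \<le> R - L \<Longrightarrow> R - k \<notin> K"
  shows "run_height L R K = k"
proof -
  have LR: "L < R" using run unfolding down_run_def by simp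
  have "k \<le> run_height L R K"
  proof (cases "k = 0")
    case False
    then have "R < R + 1 - k + run_height L R K"
      using bottom mem_iff_down_run[OF run K, of "R + 1 - k"] k LR by auto
    then show ?thesis using k by linarith
  qed simp
  moreover have "run_height L R K \<le> k"
    using below mem_iff_down_run[OF run K, of "R - k"] run_height_le[of L R K] k LR
    by (cases "k \<le> R - L") auto
  ultimately show ?thesis by simp
qed

context
  fixes L R I
  assumes run: "up_run L R" and left: "L = 1 \<or> \<not> up (L - 1)" and right: "R = N \<or> \<not> up R"
    and I: "I \<in> ideals \<alpha>"
begin

private lemma LR_up: "1 \<le> L" "L < R" "R \<le> N" and up_inside: "L \<le> x \<Longrightarrow> x < R \<Longrightarrow> up x"
  using run unfolding up_run_def by auto

lemma run_height_pro_up_step: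
  assumes "2 \<le> run_height L R I"
  shows "run_height L R (pro \<alpha> I) = run_height L R I - 1"
proof -
  define q where "q = L + run_height L R I - 1"
  have q: "L + 1 \<le> q" "q \<le> R" "q + 1 = L + run_height L R I"
    using assms run_height_le[of L R I] LR_up unfolding q_def by auto
  have "q \<in> I" "q - 1 \<in> I"
    using mem_iff_up_run[OF run I, of q] mem_iff_up_run[OF run I, of "q - 1"] q by auto
  moreover have "up (q - 1)" using up_inside[of "q - 1"] q by auto
  moreover have "\<not> (q < N \<and> up q \<and> q + 1 \<in> I)"
    using mem_iff_up_run[OF run I, of "q + 1"] q right by (cases "q < R") auto
  ultimately have "q \<notin> pro \<alpha> I" "q - 1 \<in> pro \<alpha> I"
    using mem_pro_iff[OF I, of q] mem_pro_iff[OF I, of "q - 1"] q LR_up by auto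
  then show ?thesis
    by (intro run_height_eqI_up[OF run pro_in_ideals[OF I]]) (use q_def q assms in auto)
qed

lemma run_height_pro_up_wrap:
  assumes "run_height L R I \<le> 1" and "L \<in> pro \<alpha> I"
  shows "run_height L R (pro \<alpha> I) = (if R < N \<and> R + 1 \<notin> I then R - L else R - L + 1)"
proof -
  have below_top: "x \<in> pro \<alpha> I" if "L \<le> x" "x < R" for x
    using that
  proof (induction x rule: nat_induct_at_least)
    case (Suc x)
    have "Suc x \<notin> I" using mem_iff_up_run[OF run I, of "Suc x"] Suc assms(1) by auto
    then show ?case
      using mem_pro_iff[OF I, of "Suc x"] up_inside[of x] up_inside[of "Suc x"] Suc LR_up by auto
  qed (use assms(2) in simp)
  have "R \<notin> I" using mem_iff_up_run[OF run I, of R] assms(1) LR_up by auto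
  then have "R \<in> pro \<alpha> I \<longleftrightarrow> \<not> (R < N \<and> R + 1 \<notin> I)"
    using mem_pro_iff[OF I, of R] below_top[of "R - 1"] up_inside[of "R - 1"] right LR_up by auto
  then show ?thesis
    using below_top[of "R - 1"] LR_up by (intro run_height_eqI_up[OF run pro_in_ideals[OF I]]) auto
qed

lemma bottom_mem_pro_up_run:
  assumes "run_height L R I \<le> 1"
  shows "L \<in> pro \<alpha> I \<longleftrightarrow> run_height L R I = 0 \<or> (1 < L \<and> L - 1 \<in> pro \<alpha> I)"
  using mem_pro_iff[OF I, of L] mem_iff_up_run[OF run I, of L] mem_iff_up_run[OF run I, of "L + 1"]
    up_inside[of L] left assms LR_up by auto

lemma run_height_pro_up_dec:
  assumes "2 \<le> run_height L R I \<or> L \<notin> pro \<alpha> I"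
  shows "0 < run_height L R I" and "run_height L R (pro \<alpha> I) = run_height L R I - 1"
proof -
  show "0 < run_height L R I" using assms bottom_mem_pro_up_run by force
  show "run_height L R (pro \<alpha> I) = run_height L R I - 1"
  proof (cases "2 \<le> run_height L R I")
    case False
    then have "L \<notin> pro \<alpha> I" "run_height L R I - 1 = 0" using assms by auto
    then show ?thesis by (intro run_height_eqI_up[OF run pro_in_ideals[OF I]]) auto
  qed (rule run_height_pro_up_step)
qed

lemma cyc_down_run_height_pro: "cyc_down (R - L) (run_height L R I) (run_height L R (pro \<alpha> I))"
proof (cases "2 \<le> run_height L R I \<or> L \<notin> pro \<alpha> I")
  case True
  then show ?thesis using run_height_pro_up_dec run_height_le[of L R I] LR_up
    unfolding cyc_down_def by auto
next
  case False
  then show ?thesis using run_height_pro_up_wrap unfolding cyc_down_def by auto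
qed

lemma cyc_down_run_height_pro_first:
  assumes "L = 1"
  shows "cyc_down (R - L + 1) (run_height L R I + 1) (run_height L R (pro \<alpha> I) + 1)"
proof (cases "run_height L R I = 0")
  case True
  then show ?thesis
    using run_height_pro_up_wrap bottom_mem_pro_up_run unfolding cyc_down_def by auto
next
  case False
  then have "2 \<le> run_height L R I \<or> L \<notin> pro \<alpha> I" using bottom_mem_pro_up_run assms by auto
  then show ?thesis using run_height_pro_up_dec run_height_le[of L R I] LR_up
    unfolding cyc_down_def by auto
qed

lemma cyc_down_run_height_pro_last:
  assumes "R = N"
  shows "cyc_down (R - L + 1) (run_height L R I) (run_height L R (pro \<alpha> I))"
proof (cases "2 \<le> run_height L R I \<or> L \<notin> pro \<alpha> I")
  case True
  then show ?thesis using run_height_pro_up_dec run_height_le[of L R I] LR_up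
    unfolding cyc_down_def by auto
next
  case False
  then show ?thesis using run_height_pro_up_wrap assms unfolding cyc_down_def by auto
qed

end

context
  fixes L R I
  assumes run: "down_run L R" and left: "1 < L" "up (L - 1)" and right: "R = N \<or> up R"
    and I: "I \<in> ideals \<alpha>"
begin

private lemma LR_down: "1 \<le> L" "L < R" "R \<le> N" and down_inside: "L \<le> x \<Longrightarrow> x < R \<Longrightarrow> \<not> up x"
  using run unfolding down_run_def by auto

lemma run_height_pro_down_step:
  assumes "run_height L R I < R - L"
  shows "run_height L R (pro \<alpha> I) = run_height L R I + 1"
proof -
  define q where "q = R - run_height L R I"
  have q: "L + 1 \<le> q" "q \<le> R" "q + run_height L R I = R" using assms LR_down unfolding q_def by auto
  have "q \<notin> I" "q - 1 \<notin> I"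
    using mem_iff_down_run[OF run I, of q] mem_iff_down_run[OF run I, of "q - 1"] q by auto
  moreover have "\<not> up (q - 1)" using down_inside[of "q - 1"] q by auto
  moreover have "q + 1 \<in> I" if "q < R" using mem_iff_down_run[OF run I, of "q + 1"] q that by auto
  ultimately have "q \<in> pro \<alpha> I" "q - 1 \<notin> pro \<alpha> I"
    using mem_pro_iff[OF I, of q] mem_pro_iff[OF I, of "q - 1"] q LR_down right
    by (cases "q < R"; auto)+
  then show ?thesis
    by (intro run_height_eqI_down[OF run pro_in_ideals[OF I]]) (use q_def q assms LR_down in auto)
qed

lemma run_height_pro_down_wrap:
  assumes "R - L \<le> run_height L R I" and "L \<notin> pro \<alpha> I"
  shows "run_height L R (pro \<alpha> I) = (if R < N \<and> R + 1 \<in> I then 1 else 0)"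
proof -
  have below_top: "x \<notin> pro \<alpha> I" if "L \<le> x" "x < R" for x
    using that
  proof (induction x rule: nat_induct_at_least)
    case (Suc x)
    have "Suc x \<in> I" using mem_iff_down_run[OF run I, of "Suc x"] Suc assms(1) by auto
    then show ?case
      using mem_pro_iff[OF I, of "Suc x"] down_inside[of x] down_inside[of "Suc x"] Suc LR_down
      by auto
  qed (use assms(2) in simp)
  have "R \<in> I" using mem_iff_down_run[OF run I, of R] assms(1) LR_down by auto
  then have "R \<in> pro \<alpha> I \<longleftrightarrow> R < N \<and> R + 1 \<in> I"
    using mem_pro_iff[OF I, of R] below_top[of "R - 1"] right LR_down by auto
  then show ?thesis
    using below_top[of "R - 1"] LR_down
    by (intro run_height_eqI_down[OF run pro_in_ideals[OF I]]) auto
qed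

lemma top_mem_pro_down_run:
  assumes "R - L \<le> run_height L R I"
  shows "L \<in> pro \<alpha> I \<longleftrightarrow> run_height L R I = R - L \<and> L - 1 \<in> pro \<alpha> I"
  using mem_pro_iff[OF I, of L] mem_iff_down_run[OF run I, of L]
    mem_iff_down_run[OF run I, of "L + 1"] down_inside[of L] left assms LR_down
    run_height_le[of L R I] by auto

lemma run_height_pro_down_inc:
  assumes "run_height L R I < R - L \<or> L \<in> pro \<alpha> I"
  shows "run_height L R I \<le> R - L" and "run_height L R (pro \<alpha> I) = run_height L R I + 1"
proof -
  show "run_height L R I \<le> R - L" using assms top_mem_pro_down_run by force
  show "run_height L R (pro \<alpha> I) = run_height L R I + 1"
  proof (cases "run_height L R I < R - L")
    case False
    then have "L \<in> pro \<alpha> I" "run_height L R I = R - L" using assms top_mem_pro_down_run by auto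
    then show ?thesis using LR_down by (intro run_height_eqI_down[OF run pro_in_ideals[OF I]]) auto
  qed (rule run_height_pro_down_step)
qed

lemma cyc_up_run_height_pro: "cyc_up (R - L) (run_height L R I) (run_height L R (pro \<alpha> I))"
proof (cases "run_height L R I < R - L \<or> L \<in> pro \<alpha> I")
  case True
  then show ?thesis using run_height_pro_down_inc unfolding cyc_up_def by auto
next
  case False
  then show ?thesis using run_height_pro_down_wrap run_height_le[of L R I] LR_down
    unfolding cyc_up_def by auto
qed

lemma cyc_up_run_height_pro_last:
  assumes "R = N"
  shows "cyc_up (R - L + 1) (run_height L R I + 1) (run_height L R (pro \<alpha> I) + 1)"
proof (cases "run_height L R I < R - L \<or> L \<in> pro \<alpha> I")
  case True
  then show ?thesis using run_height_pro_down_inc unfolding cyc_up_def by auto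
next
  case False
  then show ?thesis using run_height_pro_down_wrap run_height_le[of L R I] LR_down assms
    unfolding cyc_up_def by auto
qed

end

lemma up_before_fa:
  assumes "1 \<le> k" "k \<le> T - 1"
  shows "up (fa \<alpha> k - 1) \<longleftrightarrow> odd k"
proof -
  have "fa \<alpha> (k - 1) < fa \<alpha> k" using fa_less[of "k - 1" k] assms by auto
  then show ?thesis using up_iff_odd[of k "fa \<alpha> k - 1"] assms by auto
qed

lemma up_at_fa: "1 \<le> k \<Longrightarrow> k \<le> T - 1 \<Longrightarrow> up (fa \<alpha> k) \<longleftrightarrow> even k"
  using up_iff_odd[of "k + 1" "fa \<alpha> k"] fa_less[of k "k + 1"] by auto

lemma fa_mem_seg_iff:
  assumes i: "1 \<le> i" "i \<le> T" and k: "1 \<le> k" "k \<le> T - 1"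
  shows "fa \<alpha> k \<in> seg \<alpha> i \<longleftrightarrow> k = i - 1 \<or> k = i"
proof -
  have "fa \<alpha> k \<in> {1..N}" using fa_shared_bounds[OF k] by simp
  then show ?thesis
    using i k fa_le_iff[of k i] fa_le_iff[of "i - 1" k] fa_le_iff[of "T - 1" k]
    unfolding seg_def by (auto simp: fa_1)
qed

lemma seg_inter_shared:
  assumes "1 \<le> i" "i \<le> T"
  shows "seg \<alpha> i \<inter> shared \<alpha> = fa \<alpha> ` {k. 1 \<le> k \<and> k \<le> T - 1 \<and> (k = i - 1 \<or> k = i)}"
  using fa_mem_seg_iff[OF assms] unfolding shared_def by auto

lemma covers_of_fa:
  assumes "1 \<le> k" "k \<le> T - 1"
  shows "{c. (c, fa \<alpha> k) \<in> covrel \<alpha>} = (if odd k then {fa \<alpha> k - 1, fa \<alpha> k + 1} else {})"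
    and "{d. (fa \<alpha> k, d) \<in> covrel \<alpha>} = (if odd k then {} else {fa \<alpha> k - 1, fa \<alpha> k + 1})"
  using fa_shared_bounds[OF assms] up_before_fa[OF assms] up_at_fa[OF assms]
  unfolding covrel_iff by auto

lemma is_peak_fa_iff: "1 \<le> k \<Longrightarrow> k \<le> T - 1 \<Longrightarrow> is_peak \<alpha> (fa \<alpha> k) \<longleftrightarrow> odd k"
  unfolding is_peak_def using covers_of_fa(1) fa_shared_bounds by auto

lemma is_valley_fa_iff: "1 \<le> k \<Longrightarrow> k \<le> T - 1 \<Longrightarrow> is_valley \<alpha> (fa \<alpha> k) \<longleftrightarrow> even k"
  unfolding is_valley_def using covers_of_fa(2) fa_shared_bounds by auto

lemma chi_peak_eq:
  assumes i: "1 \<le> i" "i \<le> T" and k: "1 \<le> k" "k \<le> T - 1" "k = i - 1 \<or> k = i" "odd k"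
  shows "chi_peak \<alpha> i = chi (fa \<alpha> k)"
proof -
  have "p \<in> seg \<alpha> i \<inter> shared \<alpha> \<and> is_peak \<alpha> p \<longleftrightarrow> p = fa \<alpha> k" for p
    unfolding seg_inter_shared[OF i] using is_peak_fa_iff k by auto
  then show ?thesis unfolding chi_peak_def by auto
qed

lemma chi_peak_eq_0:
  assumes i: "1 \<le> i" "i \<le> T" and "\<And>k. 1 \<le> k \<Longrightarrow> k \<le> T - 1 \<Longrightarrow> k = i - 1 \<or> k = i \<Longrightarrow> even k"
  shows "chi_peak \<alpha> i = (\<lambda>_. 0)"
proof -
  have "\<not> (\<exists>p. p \<in> seg \<alpha> i \<inter> shared \<alpha> \<and> is_peak \<alpha> p)"
    unfolding seg_inter_shared[OF i] using assms(3) is_peak_fa_iff by auto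
  then show ?thesis unfolding chi_peak_def by (intro ext if_not_P)
qed

lemma chi_valley_eq:
  assumes i: "1 \<le> i" "i \<le> T" and k: "1 \<le> k" "k \<le> T - 1" "k = i - 1 \<or> k = i" "even k"
  shows "chi_valley \<alpha> i = chi (fa \<alpha> k)"
proof -
  have "p \<in> seg \<alpha> i \<inter> shared \<alpha> \<and> is_valley \<alpha> p \<longleftrightarrow> p = fa \<alpha> k" for p
    unfolding seg_inter_shared[OF i] using is_valley_fa_iff k by auto
  then show ?thesis unfolding chi_valley_def by auto
qed

lemma chi_valley_eq_0:
  assumes i: "1 \<le> i" "i \<le> T" and "\<And>k. 1 \<le> k \<Longrightarrow> k \<le> T - 1 \<Longrightarrow> k = i - 1 \<or> k = i \<Longrightarrow> odd k"
  shows "chi_valley \<alpha> i = (\<lambda>_. 0)"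
proof -
  have "\<not> (\<exists>p. p \<in> seg \<alpha> i \<inter> shared \<alpha> \<and> is_valley \<alpha> p)"
    unfolding seg_inter_shared[OF i] using assms(3) is_valley_fa_iff by auto
  then show ?thesis unfolding chi_valley_def by (intro ext if_not_P)
qed

lemma bseg_eq:
  assumes "1 \<le> i" "i \<le> T"
  shows "bseg \<alpha> i = seg \<alpha> i - fa \<alpha> ` {k. 1 \<le> k \<and> k \<le> T - 1 \<and> (k = i - 1 \<or> k = i)}"
proof -
  have "bseg \<alpha> i = seg \<alpha> i - (seg \<alpha> i \<inter> shared \<alpha>)" unfolding bseg_def by blast
  then show ?thesis unfolding seg_inter_shared[OF assms] .
qed

lemma bseg_first: "bseg \<alpha> 1 = {1..fa \<alpha> 1 - 1}"
proof -
  have "fa \<alpha> ` {k. 1 \<le> k \<and> k \<le> T - 1 \<and> (k = 1 - 1 \<or> k = 1)} = {fa \<alpha> 1}"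
    using length_ge_2 by auto
  then have "bseg \<alpha> 1 = {1..fa \<alpha> 1} - {fa \<alpha> 1}"
    using bseg_eq[of 1] length_ge_2 by (simp add: seg_def)
  also have "\<dots> = {1..fa \<alpha> 1 - 1}" by auto
  finally show ?thesis .
qed

lemma bseg_mid:
  assumes "1 < i" "i < T"
  shows "bseg \<alpha> i = {fa \<alpha> (i - 1) + 1..fa \<alpha> i - 1}"
proof -
  have "fa \<alpha> ` {k. 1 \<le> k \<and> k \<le> T - 1 \<and> (k = i - 1 \<or> k = i)} = {fa \<alpha> (i - 1), fa \<alpha> i}"
    using assms by auto
  then have "bseg \<alpha> i = {fa \<alpha> (i - 1)..fa \<alpha> i} - {fa \<alpha> (i - 1), fa \<alpha> i}"
    using bseg_eq[of i] assms by (simp add: seg_def)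
  also have "\<dots> = {fa \<alpha> (i - 1) + 1..fa \<alpha> i - 1}" by auto
  finally show ?thesis .
qed

lemma bseg_last: "bseg \<alpha> T = {fa \<alpha> (T - 1) + 1..N}"
proof -
  have "fa \<alpha> ` {k. 1 \<le> k \<and> k \<le> T - 1 \<and> (k = T - 1 \<or> k = T)} = {fa \<alpha> (T - 1)}"
    using length_ge_2 by auto
  then have "bseg \<alpha> T = {fa \<alpha> (T - 1)..N} - {fa \<alpha> (T - 1)}"
    using bseg_eq[of T] length_ge_2 by (simp add: seg_def)
  also have "\<dots> = {fa \<alpha> (T - 1) + 1..N}" by auto
  finally show ?thesis .
qed

primrec level :: "nat \<Rightarrow> int" where
  "level 0 = 0"
| "level (Suc j) = (if up j then level j + 1 else level j - 1)"

lemma level_covrel: "(c, d) \<in> covrel \<alpha> \<Longrightarrow> level d = level c + 1"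
  unfolding covrel_iff by auto

lemma level_less_if_fless: "fless \<alpha> r s \<Longrightarrow> level r < level s"
proof -
  have "(r, s) \<in> (covrel \<alpha>)\<^sup>* \<Longrightarrow> r = s \<or> level r < level s"
    by (induction rule: rtrancl_induct) (auto dest: level_covrel)
  then show "fless \<alpha> r s \<Longrightarrow> level r < level s" unfolding fless_def fle_def by blast
qed

lemma fless_up_run_iff:
  assumes run: "up_run L R" and r: "r \<in> {L..R}" and s: "s \<in> {L..R}"
  shows "fless \<alpha> r s \<longleftrightarrow> r < s"
proof -
  have level: "level y = level L + int (y - L)" if "L \<le> y" "y \<le> R" for y
    using that
  proof (induction y rule: nat_induct_at_least)
    case (Suc y) then show ?case using run unfolding up_run_def by (auto simp: Suc_diff_le)
  qed simp
  have path: "(r, y) \<in> (covrel \<alpha>)\<^sup>*" if "r \<le> y" "y \<le> R" for y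
    using that
  proof (induction y rule: nat_induct_at_least)
    case (Suc y)
    then have "(y, Suc y) \<in> covrel \<alpha>" using run r unfolding up_run_def covrel_iff by auto
    then show ?case using Suc by (meson rtrancl.rtrancl_into_rtrancl Suc_leD)
  qed simp
  show ?thesis
    using level_less_if_fless[of r s] level[of r] level[of s] path[of s] r s
    unfolding fless_def fle_def by auto
qed

lemma fless_down_run_iff:
  assumes run: "down_run L R" and r: "r \<in> {L..R}" and s: "s \<in> {L..R}"
  shows "fless \<alpha> r s \<longleftrightarrow> s < r"
proof -
  have level: "level y = level L - int (y - L)" if "L \<le> y" "y \<le> R" for y
    using that
  proof (induction y rule: nat_induct_at_least)
    case (Suc y) then show ?case using run unfolding down_run_def by (auto simp: Suc_diff_le)
  qed simp
  have path: "(y, s) \<in> (covrel \<alpha>)\<^sup>*" if "s \<le> y" "y \<le> R" for y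
    using that
  proof (induction y rule: nat_induct_at_least)
    case (Suc y)
    then have "(Suc y, y) \<in> covrel \<alpha>" using run s unfolding down_run_def covrel_iff by auto
    then show ?case using Suc by (meson converse_rtrancl_into_rtrancl Suc_leD)
  qed simp
  show ?thesis
    using level_less_if_fless[of r s] level[of r] level[of s] path[of r] r s
    unfolding fless_def fle_def by auto
qed

lemma sij_up_run:
  assumes run: "up_run L R" and B: "bseg \<alpha> i = {B0..B1}" "L \<le> B0" "B1 \<le> R"
    and j: "1 \<le> j" "j \<le> B1 + 1 - B0"
  shows "sij \<alpha> i j = B0 + j - 1"
  unfolding sij_def
proof (rule the_equality)
  have rank: "card {r \<in> bseg \<alpha> i. fless \<alpha> r s} = s - B0" if "s \<in> {B0..B1}" for s
  proof -
    have "{r \<in> bseg \<alpha> i. fless \<alpha> r s} = {B0..<s}"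
      unfolding B(1) using fless_up_run_iff[OF run] that B by auto
    then show ?thesis by simp
  qed
  have "B0 + j - 1 \<in> {B0..B1}" using j by auto
  then show "B0 + j - 1 \<in> bseg \<alpha> i \<and> card {r \<in> bseg \<alpha> i. fless \<alpha> r (B0 + j - 1)} = j - 1"
    using rank B(1) j by auto
  show "s = B0 + j - 1" if "s \<in> bseg \<alpha> i \<and> card {r \<in> bseg \<alpha> i. fless \<alpha> r s} = j - 1" for s
    using that rank[of s] j B(1) by auto
qed

lemma sij_down_run:
  assumes run: "down_run L R" and B: "bseg \<alpha> i = {B0..B1}" "L \<le> B0" "B1 \<le> R"
    and j: "1 \<le> j" "j \<le> B1 + 1 - B0"
  shows "sij \<alpha> i j = B1 + 1 - j"
  unfolding sij_def
proof (rule the_equality)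
  have rank: "card {r \<in> bseg \<alpha> i. fless \<alpha> r s} = B1 - s" if "s \<in> {B0..B1}" for s
  proof -
    have "{r \<in> bseg \<alpha> i. fless \<alpha> r s} = {s<..B1}"
      unfolding B(1) using fless_down_run_iff[OF run] that B by auto
    then show ?thesis by simp
  qed
  have "B1 + 1 - j \<in> {B0..B1}" using j by auto
  then show "B1 + 1 - j \<in> bseg \<alpha> i \<and> card {r \<in> bseg \<alpha> i. fless \<alpha> r (B1 + 1 - j)} = j - 1"
    using rank B(1) j by auto
  show "s = B1 + 1 - j" if "s \<in> bseg \<alpha> i \<and> card {r \<in> bseg \<alpha> i. fless \<alpha> r s} = j - 1" for s
    using that rank[of s] j B(1) by auto
qed

lemma cohomologous_const_gen_middle_up:
  assumes i: "1 < i" "i < T" "odd i" and j: "0 < j" "j < \<alpha> ! (i - 1)"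
  shows "cohomologous_const (ideals \<alpha>) (pro \<alpha>) (gen \<alpha> i j)"
proof -
  define L R A where "L = fa \<alpha> (i - 1)" and "R = fa \<alpha> i" and "A = \<alpha> ! (i - 1)"
  have R: "R = L + A" using fa_pred_add[of i] i unfolding L_def R_def A_def by simp
  have L: "2 \<le> L" and RN: "R < N"
    using fa_shared_bounds[of "i - 1"] fa_shared_bounds[of i] i unfolding L_def R_def by auto
  have run: "up_run L R"
    using up_iff_odd[of i] i L RN R j unfolding up_run_def L_def R_def A_def by auto
  have left: "\<not> up (L - 1)" using up_before_fa[of "i - 1"] i unfolding L_def by auto
  have right: "\<not> up R" using up_at_fa[of i] i unfolding R_def by auto
  have sij: "sij \<alpha> i j = L + j"
    using sij_up_run[OF run, of i "L + 1" "R - 1" j] bseg_mid[OF i(1,2)] R j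
    unfolding L_def R_def A_def by auto
  have peak: "chi_peak \<alpha> i = chi R" using chi_peak_eq[of i i] i unfolding R_def by auto
  have valley: "chi_valley \<alpha> i = chi L" using chi_valley_eq[of i "i - 1"] i unfolding L_def by auto
  have "gen \<alpha> i j I = height_stat A j (run_height L R I) + 0" if I: "I \<in> ideals \<alpha>" for I
    using mem_iff_up_run[OF run I, of "L + j"] mem_iff_up_run[OF run I, of R]
      mem_iff_up_run[OF run I, of L] R j
    unfolding gen_def sij peak valley chi_def height_stat_def A_def by auto
  moreover have "cyc_down A (run_height L R I) (run_height L R (pro \<alpha> I))" if "I \<in> ideals \<alpha>" for I
    using cyc_down_run_height_pro[OF run _ _ that] left right R by auto
  ultimately show ?thesis
    using j unfolding A_def
    by (intro cohomologous_const_height_stat_down[where ht = "run_height L R"])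
qed

lemma cohomologous_const_gen_first:
  assumes j: "0 < j" "j < \<alpha> ! 0"
  shows "cohomologous_const (ideals \<alpha>) (pro \<alpha>) (gen \<alpha> 1 j)"
proof -
  define R A where "R = fa \<alpha> 1" and "A = \<alpha> ! 0"
  have R: "R = A" unfolding R_def A_def by (rule fa_1)
  have RN: "R < N" using fa_shared_bounds[of 1] length_ge_2 unfolding R_def by auto
  have run: "up_run 1 R"
    using up_iff_odd[of 1] length_ge_2 RN R j unfolding up_run_def R_def A_def by auto
  have right: "\<not> up R" using up_at_fa[of 1] length_ge_2 unfolding R_def by auto
  have sij: "sij \<alpha> 1 j = j"
    using sij_up_run[OF run, of 1 1 "R - 1" j] bseg_first R j unfolding R_def A_def by auto
  have peak: "chi_peak \<alpha> 1 = chi R" using chi_peak_eq[of 1 1] length_ge_2 unfolding R_def by auto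
  have valley: "chi_valley \<alpha> 1 = (\<lambda>_. 0)" using chi_valley_eq_0[of 1] length_ge_2 by auto
  have "gen \<alpha> 1 j I = height_stat A j (run_height 1 R I + 1) + (real A - real j)"
    if I: "I \<in> ideals \<alpha>" for I
    using mem_iff_up_run[OF run I, of j] mem_iff_up_run[OF run I, of R] R j
    unfolding gen_def sij peak valley chi_def height_stat_def A_def by auto
  moreover have "cyc_down A (run_height 1 R I + 1) (run_height 1 R (pro \<alpha> I) + 1)"
    if "I \<in> ideals \<alpha>" for I
    using cyc_down_run_height_pro_first[OF run _ _ that] right R j by (simp add: A_def)
  ultimately show ?thesis
    using j unfolding A_def
    by (intro cohomologous_const_height_stat_down[where ht = "\<lambda>I. run_height 1 R I + 1"])
qed

lemma cohomologous_const_gen_last_up: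
  assumes T: "odd T" and j: "0 < j" "j < \<alpha> ! (T - 1)"
  shows "cohomologous_const (ideals \<alpha>) (pro \<alpha>) (gen \<alpha> T j)"
proof -
  define L A where "L = fa \<alpha> (T - 1)" and "A = \<alpha> ! (T - 1)"
  have N: "N + 1 = L + A" unfolding L_def A_def by (rule N_Suc_eq)
  then have A: "N - L + 1 = A" using j unfolding A_def by linarith
  have L: "2 \<le> L" using fa_shared_bounds[of "T - 1"] length_ge_2 unfolding L_def by auto
  have run: "up_run L N"
    using up_iff_odd[of T] length_ge_2 T L N j N_Suc_eq fa_pred_add[of T]
    unfolding up_run_def L_def A_def by auto
  have left: "\<not> up (L - 1)" using up_before_fa[of "T - 1"] length_ge_2 T unfolding L_def by auto
  have sij: "sij \<alpha> T j = L + j"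
    using sij_up_run[OF run, of T "L + 1" N j] bseg_last N j unfolding L_def A_def by auto
  have peak: "chi_peak \<alpha> T = (\<lambda>_. 0)"
    using length_ge_2 T by (intro chi_peak_eq_0) presburger+
  have valley: "chi_valley \<alpha> T = chi L"
    using length_ge_2 T unfolding L_def by (intro chi_valley_eq) presburger+
  have "gen \<alpha> T j I = height_stat A j (run_height L N I) + 0" if I: "I \<in> ideals \<alpha>" for I
    using mem_iff_up_run[OF run I, of "L + j"] mem_iff_up_run[OF run I, of L]
      run_height_le[of L N I] N j
    unfolding gen_def sij peak valley chi_def height_stat_def A_def by auto
  moreover have "cyc_down A (run_height L N I) (run_height L N (pro \<alpha> I))" if "I \<in> ideals \<alpha>" for I
    using cyc_down_run_height_pro_last[OF run _ _ that] left unfolding A by simp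
  ultimately show ?thesis
    using j unfolding A_def
    by (intro cohomologous_const_height_stat_down[where ht = "run_height L N"])
qed

lemma cohomologous_const_gen_middle_down:
  assumes i: "1 < i" "i < T" "even i" and j: "0 < j" "j < \<alpha> ! (i - 1)"
  shows "cohomologous_const (ideals \<alpha>) (pro \<alpha>) (gen \<alpha> i j)"
proof -
  define L R A where "L = fa \<alpha> (i - 1)" and "R = fa \<alpha> i" and "A = \<alpha> ! (i - 1)"
  have R: "R = L + A" using fa_pred_add[of i] i unfolding L_def R_def A_def by simp
  have L: "2 \<le> L" and RN: "R < N"
    using fa_shared_bounds[of "i - 1"] fa_shared_bounds[of i] i unfolding L_def R_def by auto
  have run: "down_run L R"
    using up_iff_odd[of i] i L RN R j unfolding down_run_def L_def R_def A_def by auto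
  have left: "up (L - 1)" using up_before_fa[of "i - 1"] i unfolding L_def by auto
  have right: "up R" using up_at_fa[of i] i unfolding R_def by auto
  have sij: "sij \<alpha> i j = R - j"
    using sij_down_run[OF run, of i "L + 1" "R - 1" j] bseg_mid[OF i(1,2)] R j
    unfolding L_def R_def A_def by auto
  have peak: "chi_peak \<alpha> i = chi L" using chi_peak_eq[of i "i - 1"] i unfolding L_def by auto
  have valley: "chi_valley \<alpha> i = chi R" using chi_valley_eq[of i i] i unfolding R_def by auto
  have "gen \<alpha> i j I = height_stat A j (run_height L R I) + 0" if I: "I \<in> ideals \<alpha>" for I
    using mem_iff_down_run[OF run I, of "R - j"] mem_iff_down_run[OF run I, of R]
      mem_iff_down_run[OF run I, of L] R j
    unfolding gen_def sij peak valley chi_def height_stat_def A_def by auto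
  moreover have "cyc_up A (run_height L R I) (run_height L R (pro \<alpha> I))" if "I \<in> ideals \<alpha>" for I
    using cyc_up_run_height_pro[OF run _ left _ that] L right R by auto
  ultimately show ?thesis
    using j unfolding A_def
    by (intro cohomologous_const_height_stat_up[where ht = "run_height L R"])
qed

lemma cohomologous_const_gen_last_down:
  assumes T: "even T" and j: "0 < j" "j < \<alpha> ! (T - 1)"
  shows "cohomologous_const (ideals \<alpha>) (pro \<alpha>) (gen \<alpha> T j)"
proof -
  define L A where "L = fa \<alpha> (T - 1)" and "A = \<alpha> ! (T - 1)"
  have N: "N + 1 = L + A" unfolding L_def A_def by (rule N_Suc_eq)
  then have A: "N - L + 1 = A" using j unfolding A_def by linarith
  have L: "2 \<le> L" using fa_shared_bounds[of "T - 1"] length_ge_2 unfolding L_def by auto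
  have run: "down_run L N"
    using up_iff_odd[of T] length_ge_2 T L N j N_Suc_eq fa_pred_add[of T]
    unfolding down_run_def L_def A_def by auto
  have left: "up (L - 1)" using up_before_fa[of "T - 1"] length_ge_2 T unfolding L_def by auto
  have sij: "sij \<alpha> T j = N + 1 - j"
    using sij_down_run[OF run, of T "L + 1" N j] bseg_last N j unfolding L_def A_def by auto
  have peak: "chi_peak \<alpha> T = chi L"
    using length_ge_2 T unfolding L_def by (intro chi_peak_eq) presburger+
  have valley: "chi_valley \<alpha> T = (\<lambda>_. 0)"
    using length_ge_2 T by (intro chi_valley_eq_0) presburger+
  have "gen \<alpha> T j I = height_stat A j (run_height L N I + 1) + (real A - real j)"
    if I: "I \<in> ideals \<alpha>" for I
    using mem_iff_down_run[OF run I, of "N + 1 - j"] mem_iff_down_run[OF run I, of L] N j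
    unfolding gen_def sij peak valley chi_def height_stat_def A_def by auto
  moreover have "cyc_up A (run_height L N I + 1) (run_height L N (pro \<alpha> I) + 1)"
    if "I \<in> ideals \<alpha>" for I
    using cyc_up_run_height_pro_last[OF run _ left _ that] L unfolding A by simp
  ultimately show ?thesis
    using j unfolding A_def
    by (intro cohomologous_const_height_stat_up[where ht = "\<lambda>I. run_height L N I + 1"])
qed

lemma cohomologous_const_gen:
  assumes i: "1 \<le> i" "i \<le> T" and j: "0 < j" "j < \<alpha> ! (i - 1)"
  shows "cohomologous_const (ideals \<alpha>) (pro \<alpha>) (gen \<alpha> i j)"
proof -
  consider "i = 1" | "1 < i" "i < T" | "i = T"
    using i length_ge_2 by linarith
  then show ?thesis
  proof cases
    case 1
    then show ?thesis using cohomologous_const_gen_first j by simp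
  next
    case 2
    then show ?thesis
      using cohomologous_const_gen_middle_up cohomologous_const_gen_middle_down j by blast
  next
    case 3
    then show ?thesis
      using cohomologous_const_gen_last_up cohomologous_const_gen_last_down j by blast
  qed
qed

end

theorem theorem7p5:
  fixes \<alpha> :: "nat list" and c :: "nat \<Rightarrow> nat \<Rightarrow> real"
  assumes "length \<alpha> \<ge> 2"
    and "\<forall>x\<in>set \<alpha>. x > 0"
    and "hd \<alpha> \<ge> 2" and "last \<alpha> \<ge> 2"
  shows "homomesic (ideals \<alpha>) (pro \<alpha>)
           (\<lambda>I. \<Sum>i = 1..length \<alpha>. \<Sum>j = 1..\<alpha> ! (i - 1) - 1. c i j * gen \<alpha> i j I)"
proof -
  interpret fence \<alpha> using assms by unfold_locales
  have "cohomologous_const (ideals \<alpha>) (pro \<alpha>)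
      (\<lambda>I. \<Sum>i = 1..length \<alpha>. \<Sum>j = 1..\<alpha> ! (i - 1) - 1. c i j * gen \<alpha> i j I)"
    by (intro cohomologous_const_sum cohomologous_const_scale cohomologous_const_gen) auto
  then show ?thesis
    using finite_ideals pro_in_ideals inj_on_pro by (intro homomesic_if_cohomologous_const) auto
qed

end
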